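(* Let $G=(V,E)$ be a finite cavity-monotone network. As a function of $t\in(0,\infty)$, the energy $U(G;t)$ is non-decreasing, tends to $0$ as $t\to0$ and to $M(G)$ as $t\to\infty$. More precisely, $$\forall t>0,\quad U(G;t)\le t\sum_{ij\in E}A(\mu_i)A(\mu_j),$$ $$\forall t>1,\quad U(G;t)\ge M(G)-\frac{1}{\log t}\Big(|E|\log 2+\sum_{i\in V}\log A(\mu_i)\Big),$$ where for a measure $\mu$, $A(\mu)=\max\mu/\min\mu$ with $\max\mu=\max\{\mu(F):\mu(F)>0\}$ and $\min\mu=\min\{\mu(F):\mu(F)>0\}$.
   Context: Measures over subsets: for a finite set $E$, a measure is $\mu:2^E\to[0,\infty)$. For $\mathbf w\in(0,\infty)^E$, $\mathbb P^{\mathbf w}_\mu(\mathcal F=F)=\mu(F)\prod_{e\in F}w_e/\sum_{F'}\mu(F')\prod_{e\in F'}w_e$. $\mu$ is Rayleigh if for all $\mathbf w\in(0,\infty)^E$, $e\neq f$: $\mathbb P^{\mathbf w}_\mu(e,f\in\mathcal F)\le\mathbb P^{\mathbf w}_\mu(e\in\mathcal F)\mathbb P^{\mathbf w}_\mu(f\in\mathcal F)$; size-increasing if for all $\mathbf w\in(0,\infty)^E$, $e\in E$: $\mathbb E^{\mathbf w}_\mu[|\mathcal F|\mathbf 1_{e\in\mathcal F}]>\mathbb E^{\mathbf w}_\mu|\mathcal F|\,\mathbb P^{\mathbf w}_\mu(e\in\mathcal F)$; cavity-monotone if $\mu(\emptyset)>0$, Rayleigh and size-increasing. Networks: a finite network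 is a finite simple graph $G=(V,E)$ with, for each $i\in V$, a local measure $\mu_i$ over the subsets of $E_i$ (edges incident to $i$); cavity-monotone if every $\mu_i$ is. Global measure $\mu(F)=\prod_{i}\mu_i(F\cap E_i)$; $Z(G;t)=\sum_{F\subseteq E}\mu(F)t^{|F|}$; Gibbs–Boltzmann law $\mathbb P^t_G(\mathcal F=F)=\mu(F)t^{|F|}/Z(G;t)$; energy $U(G;t)=\mathbb E^t_G|\mathcal F|$; $M(G)=\max\{|F|:\mu(F)>0\}$. *)

theory Defs
  imports "HOL-Analysis.Analysis"
begin

definition is_measure :: "'a set \<Rightarrow> ('a set \<Rightarrow> real) \<Rightarrow> bool" where
  "is_measure S \<mu> \<longleftrightarrow> finite S \<and> (\<forall>F. F \<subseteq> S \<longrightarrow> \<mu> F \<ge> 0)"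

definition wZ :: "'a set \<Rightarrow> ('a set \<Rightarrow> real) \<Rightarrow> ('a \<Rightarrow> real) \<Rightarrow> real" where
  "wZ S \<mu> w = (\<Sum>F\<in>Pow S. \<mu> F * (\<Prod>e\<in>F. w e))"

definition wProb :: "'a set \<Rightarrow> ('a set \<Rightarrow> real) \<Rightarrow> ('a \<Rightarrow> real) \<Rightarrow> ('a set \<Rightarrow> bool) \<Rightarrow> real" where
  "wProb S \<mu> w P = (\<Sum>F\<in>{F\<in>Pow S. P F}. \<mu> F * (\<Prod>e\<in>F. w e)) / wZ S \<mu> w"

definition wExp :: "'a set \<Rightarrow> ('a set \<Rightarrow> real) \<Rightarrow> ('a \<Rightarrow> real) \<Rightarrow> ('a set \<Rightarrow> real) \<Rightarrow> real" where
  "wExp S \<mu> w X = (\<Sum>F\<in>Pow S. X F * \<mu> F * (\<Prod>e\<in>F. w e)) / wZ S \<mu> w"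

definition rayleigh :: "'a set \<Rightarrow> ('a set \<Rightarrow> real) \<Rightarrow> bool" where
  "rayleigh S \<mu> \<longleftrightarrow> (\<forall>w. (\<forall>e\<in>S. w e > 0) \<longrightarrow>
     (\<forall>e\<in>S. \<forall>f\<in>S. e \<noteq> f \<longrightarrow>
        wProb S \<mu> w (\<lambda>F. e \<in> F \<and> f \<in> F) \<le> wProb S \<mu> w (\<lambda>F. e \<in> F) * wProb S \<mu> w (\<lambda>F. f \<in> F)))"

definition size_increasing :: "'a set \<Rightarrow> ('a set \<Rightarrow> real) \<Rightarrow> bool" where
  "size_increasing S \<mu> \<longleftrightarrow> (\<forall>w. (\<forall>e\<in>S. w e > 0) \<longrightarrow>
     (\<forall>e\<in>S. wExp S \<mu> w (\<lambda>F. real (card F) * (if e \<in> F then 1 else 0))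
              > wExp S \<mu> w (\<lambda>F. real (card F)) * wProb S \<mu> w (\<lambda>F. e \<in> F)))"

definition cavity_monotone :: "'a set \<Rightarrow> ('a set \<Rightarrow> real) \<Rightarrow> bool" where
  "cavity_monotone S \<mu> \<longleftrightarrow> \<mu> {} > 0 \<and> rayleigh S \<mu> \<and> size_increasing S \<mu>"

definition max_meas :: "'a set \<Rightarrow> ('a set \<Rightarrow> real) \<Rightarrow> real" where
  "max_meas S \<mu> = Max {\<mu> F | F. F \<subseteq> S \<and> \<mu> F > 0}"

definition min_meas :: "'a set \<Rightarrow> ('a set \<Rightarrow> real) \<Rightarrow> real" where
  "min_meas S \<mu> = Min {\<mu> F | F. F \<subseteq> S \<and> \<mu> F > 0}"

definition Ameas :: "'a set \<Rightarrow> ('a set \<Rightarrow> real) \<Rightarrow> real" where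
  "Ameas S \<mu> = max_meas S \<mu> / min_meas S \<mu>"

definition simple_graph :: "'v set \<Rightarrow> 'v set set \<Rightarrow> bool" where
  "simple_graph V E \<longleftrightarrow> finite V \<and> (\<forall>e\<in>E. e \<subseteq> V \<and> card e = 2)"

definition inc_edges :: "'v set set \<Rightarrow> 'v \<Rightarrow> 'v set set" where
  "inc_edges E i = {e \<in> E. i \<in> e}"

definition network :: "'v set \<Rightarrow> 'v set set \<Rightarrow> ('v \<Rightarrow> 'v set set \<Rightarrow> real) \<Rightarrow> bool" where
  "network V E \<mu> \<longleftrightarrow> simple_graph V E \<and> (\<forall>i\<in>V. is_measure (inc_edges E i) (\<mu> i))"

definition cavity_monotone_network :: "'v set \<Rightarrow> 'v set set \<Rightarrow> ('v \<Rightarrow> 'v set set \<Rightarrow> real) \<Rightarrow> bool" where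
  "cavity_monotone_network V E \<mu> \<longleftrightarrow> network V E \<mu> \<and>
     (\<forall>i\<in>V. cavity_monotone (inc_edges E i) (\<mu> i))"

definition global_meas :: "'v set \<Rightarrow> 'v set set \<Rightarrow> ('v \<Rightarrow> 'v set set \<Rightarrow> real) \<Rightarrow> 'v set set \<Rightarrow> real" where
  "global_meas V E \<mu> F = (\<Prod>i\<in>V. \<mu> i (F \<inter> inc_edges E i))"

definition partition_fn :: "'v set \<Rightarrow> 'v set set \<Rightarrow> ('v \<Rightarrow> 'v set set \<Rightarrow> real) \<Rightarrow> real \<Rightarrow> real" where
  "partition_fn V E \<mu> t = (\<Sum>F\<in>Pow E. global_meas V E \<mu> F * t ^ card F)"

definition energy :: "'v set \<Rightarrow> 'v set set \<Rightarrow> ('v \<Rightarrow> 'v set set \<Rightarrow> real) \<Rightarrow> real \<Rightarrow> real" where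
  "energy V E \<mu> t = (\<Sum>F\<in>Pow E. real (card F) * (global_meas V E \<mu> F * t ^ card F / partition_fn V E \<mu> t))"

definition max_size :: "'v set \<Rightarrow> 'v set set \<Rightarrow> ('v \<Rightarrow> 'v set set \<Rightarrow> real) \<Rightarrow> nat" where
  "max_size V E \<mu> = Max {card F | F. F \<subseteq> E \<and> global_meas V E \<mu> F > 0}"

end

theory Submission
  imports Defs
begin

(* Write Z(t) = sum_F mu(F) t^|F| for the partition function of the network and U(t) for the
   mean size of F under the Gibbs law.  The proof rests on three observations.

   1. Support of Rayleigh measures.  If mu is Rayleigh and mu({}) > 0, then the support
      {F. mu F > 0} is closed under taking subsets.  The key step is a superadditivity of
      "distances to the support": testing the Rayleigh inequality against weights that are
      huge on a supported set B and tiny elsewhere shows that a supported superset of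
      B + {e,f} has at least d_e + d_f new elements.  Consequently mu(S + e) <= A(mu) mu(S).
   2. General facts about Z(t) = sum_F g F t^(c F) with g >= 0: the mean of c is
      non-decreasing in t (a Chebyshev-type double-sum argument), and
      ln Z(t) - ln Z(1) <= U(t) ln t (from ln x <= x - 1, i.e. convexity of ln Z in ln t).
   3. For a network: U(t) = sum_e P(e in F) and, removing e from F, P(e in F) <= t A_i A_j;
      while ln Z(t) >= M ln t + sum_i ln (min mu_i) and ln Z(1) <= |E| ln 2 + sum_i ln (max mu_i).
   The limits at 0 and at infinity follow from the two bounds by squeezing. *)

section \<open>Rayleigh measures have down-closed support\<close>

definition down_closed_support :: "'a set \<Rightarrow> ('a set \<Rightarrow> real) \<Rightarrow> bool" where
  "down_closed_support S \<mu> \<longleftrightarrow> (\<forall>F G. G \<subseteq> F \<longrightarrow> F \<subseteq> S \<longrightarrow> \<mu> F > 0 \<longrightarrow> \<mu> G > 0)"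

lemma rayleigh_cross_moments:
  assumes ray: "rayleigh X \<mu>" and w: "\<forall>g\<in>X. w g > 0" and c: "c > 0"
    and q: "\<And>F. F \<subseteq> X \<Longrightarrow> (\<Prod>g\<in>F. w g) = c * q F"
    and Z: "(\<Sum>F\<in>Pow X. \<mu> F * q F) > 0"
    and e: "e \<in> X" and f: "f \<in> X" and ef: "e \<noteq> f"
  shows "(\<Sum>F\<in>{F\<in>Pow X. e \<in> F \<and> f \<in> F}. \<mu> F * q F) * (\<Sum>F\<in>Pow X. \<mu> F * q F)
       \<le> (\<Sum>F\<in>{F\<in>Pow X. e \<in> F}. \<mu> F * q F) * (\<Sum>F\<in>{F\<in>Pow X. f \<in> F}. \<mu> F * q F)"
proof -
  define N where "N = (\<lambda>P. \<Sum>F\<in>{F\<in>Pow X. P F}. \<mu> F * q F)"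
  have N_all: "N (\<lambda>_. True) = (\<Sum>F\<in>Pow X. \<mu> F * q F)"
    by (simp add: N_def Pow_def)
  have scale: "(\<Sum>F\<in>{F\<in>Pow X. P F}. \<mu> F * (\<Prod>g\<in>F. w g)) = c * N P" for P
    unfolding N_def sum_distrib_left by (rule sum.cong) (auto simp: q)
  have Zw: "wZ X \<mu> w = c * N (\<lambda>_. True)"
    using scale[of "\<lambda>_. True"] by (simp add: wZ_def Pow_def)
  have NZ: "N (\<lambda>_. True) > 0" using Z N_all by simp
  have "wProb X \<mu> w (\<lambda>F. e \<in> F \<and> f \<in> F) \<le> wProb X \<mu> w (\<lambda>F. e \<in> F) * wProb X \<mu> w (\<lambda>F. f \<in> F)"
    using ray w e f ef unfolding rayleigh_def by blast
  then have "N (\<lambda>F. e \<in> F \<and> f \<in> F) / N (\<lambda>_. True)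
      \<le> (N (\<lambda>F. e \<in> F) / N (\<lambda>_. True)) * (N (\<lambda>F. f \<in> F) / N (\<lambda>_. True))"
    using c unfolding wProb_def scale Zw by simp
  then show ?thesis using NZ unfolding N_all[symmetric] by (simp add: N_def field_simps)
qed

text \<open>Weights s^-K on B and s off B give, up to the constant factor s^(K |B|), the weight
  s^(|F - B| + K |B - F|): configurations far from B are penalised.\<close>
lemma prod_two_level_weights:
  fixes s :: real and K :: nat
  assumes s: "s > 0" and F: "finite F" and B: "finite B"
  shows "s ^ (K * card B) * (\<Prod>g\<in>F. if g \<in> B then inverse (s ^ K) else s)
       = s ^ (card (F - B) + K * card (B - F))"
proof -
  have split_B: "card B = card (F \<inter> B) + card (B - F)"
    using B by (metis Int_commute card_Int_Diff)
  have "(\<Prod>g\<in>F. if g \<in> B then inverse (s ^ K) else s) = inverse (s ^ K) ^ card (F \<inter> B) * s ^ card (F - B)"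
    using F by (simp add: prod.If_cases Diff_eq Int_def)
  then show ?thesis
    using s by (simp add: split_B add_mult_distrib2 power_add power_mult power_inverse field_simps)
qed

lemma support_tail_bound:
  fixes s :: real and K d :: nat
  assumes meas: "is_measure X \<mu>" and s: "0 < s" "s \<le> 1" and B: "finite B" and dK: "d \<le> K"
    and d: "\<And>R. B \<union> {a} \<subseteq> R \<Longrightarrow> R \<subseteq> X \<Longrightarrow> \<mu> R > 0 \<Longrightarrow> d \<le> card (R - B)"
  shows "(\<Sum>F\<in>{F\<in>Pow X. a \<in> F}. \<mu> F * s ^ (card (F - B) + K * card (B - F)))
       \<le> (\<Sum>F\<in>Pow X. \<mu> F) * s ^ d"
proof -
  have finX: "finite X" and nn: "\<And>F. F \<subseteq> X \<Longrightarrow> 0 \<le> \<mu> F"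
    using meas by (auto simp: is_measure_def)
  have "\<mu> F * s ^ (card (F - B) + K * card (B - F)) \<le> \<mu> F * s ^ d"
    if F: "F \<subseteq> X" "a \<in> F" for F
  proof (cases "\<mu> F > 0")
    case True
    have "d \<le> card (F - B) + K * card (B - F)"
    proof (cases "B \<subseteq> F")
      case True
      then show ?thesis using d[of F] F \<open>\<mu> F > 0\<close> by auto
    next
      case False
      then have "1 \<le> card (B - F)" using B by (simp add: Suc_le_eq card_gt_0_iff)
      then have "K \<le> K * card (B - F)" by simp
      then show ?thesis using dK by linarith
    qed
    then show ?thesis using s True by (intro mult_left_mono power_decreasing) auto
  next
    case False
    then show ?thesis using nn[OF F(1)] by simp
  qed
  then have "(\<Sum>F\<in>{F\<in>Pow X. a \<in> F}. \<mu> F * s ^ (card (F - B) + K * card (B - F)))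
      \<le> (\<Sum>F\<in>{F\<in>Pow X. a \<in> F}. \<mu> F * s ^ d)"
    by (intro sum_mono) auto
  also have "\<dots> \<le> (\<Sum>F\<in>Pow X. \<mu> F * s ^ d)"
    using finX nn s by (intro sum_mono2) auto
  finally show ?thesis by (simp add: sum_distrib_right)
qed

lemma rayleigh_support_power_bound:
  fixes s :: real and de df :: nat
  assumes meas: "is_measure X \<mu>" and ray: "rayleigh X \<mu>"
    and B: "B \<subseteq> X" "\<mu> B > 0"
    and e: "e \<in> X - B" and f: "f \<in> X - B" and ef: "e \<noteq> f"
    and de: "\<And>R. B \<union> {e} \<subseteq> R \<Longrightarrow> R \<subseteq> X \<Longrightarrow> \<mu> R > 0 \<Longrightarrow> de \<le> card (R - B)"
    and df: "\<And>R. B \<union> {f} \<subseteq> R \<Longrightarrow> R \<subseteq> X \<Longrightarrow> \<mu> R > 0 \<Longrightarrow> df \<le> card (R - B)"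
    and R: "B \<union> {e, f} \<subseteq> R" "R \<subseteq> X" "\<mu> R > 0"
    and s: "0 < s" "s \<le> 1"
  shows "\<mu> B * \<mu> R * s ^ card (R - B) \<le> (\<Sum>F\<in>Pow X. \<mu> F)\<^sup>2 * s ^ (de + df)"
proof -
  have finX: "finite X" and nn: "\<And>F. F \<subseteq> X \<Longrightarrow> 0 \<le> \<mu> F"
    using meas by (auto simp: is_measure_def)
  have finB: "finite B" using B finX finite_subset by blast
  define K where "K = de + df"
  define q where "q = (\<lambda>F. s ^ (card (F - B) + K * card (B - F)))"
  define w where "w = (\<lambda>g. if g \<in> B then inverse (s ^ K) else s)"
  define N where "N = (\<lambda>P. \<Sum>F\<in>{F\<in>Pow X. P F}. \<mu> F * q F)"
  define T where "T = (\<Sum>F\<in>Pow X. \<mu> F)"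
  have terms_nn: "0 \<le> \<mu> F * q F" if "F \<subseteq> X" for F
    using nn[OF that] s by (simp add: q_def)
  have Z_ge: "\<mu> B \<le> (\<Sum>F\<in>Pow X. \<mu> F * q F)"
  proof -
    have "\<mu> B * q B \<le> (\<Sum>F\<in>Pow X. \<mu> F * q F)"
      using B finX terms_nn by (intro member_le_sum) auto
    then show ?thesis by (simp add: q_def)
  qed
  have cross: "N (\<lambda>F. e \<in> F \<and> f \<in> F) * (\<Sum>F\<in>Pow X. \<mu> F * q F) \<le> N (\<lambda>F. e \<in> F) * N (\<lambda>F. f \<in> F)"
    unfolding N_def
  proof (rule rayleigh_cross_moments[OF ray, where w = w and c = "inverse (s ^ (K * card B))"])
    show "\<forall>g\<in>X. 0 < w g" using s by (simp add: w_def)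
    show "0 < inverse (s ^ (K * card B))" using s by simp
    show "prod w F = inverse (s ^ (K * card B)) * q F" if "F \<subseteq> X" for F
      using prod_two_level_weights[OF s(1) finite_subset[OF that finX] finB, of K] s
      by (simp add: w_def q_def field_simps)
    show "0 < (\<Sum>F\<in>Pow X. \<mu> F * q F)" using Z_ge B by linarith
  qed (use e f ef in auto)
  have N_ef: "\<mu> R * s ^ card (R - B) \<le> N (\<lambda>F. e \<in> F \<and> f \<in> F)"
  proof -
    have "\<mu> R * q R \<le> N (\<lambda>F. e \<in> F \<and> f \<in> F)"
      unfolding N_def using R finX terms_nn by (intro member_le_sum) auto
    moreover have "B - R = {}" using R by auto
    ultimately show ?thesis by (simp add: q_def)
  qed
  have N_e: "N (\<lambda>F. e \<in> F) \<le> T * s ^ de"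
    unfolding N_def q_def T_def using e by (intro support_tail_bound[OF meas s finB _ de]) (auto simp: K_def)
  have N_f: "N (\<lambda>F. f \<in> F) \<le> T * s ^ df"
    unfolding N_def q_def T_def using f by (intro support_tail_bound[OF meas s finB _ df]) (auto simp: K_def)
  have N_nn: "0 \<le> N P" for P unfolding N_def using terms_nn by (intro sum_nonneg) auto
  have "\<mu> B * \<mu> R * s ^ card (R - B) = (\<mu> R * s ^ card (R - B)) * \<mu> B" by simp
  also have "\<dots> \<le> N (\<lambda>F. e \<in> F \<and> f \<in> F) * (\<Sum>F\<in>Pow X. \<mu> F * q F)"
    using N_ef Z_ge B N_nn by (intro mult_mono) auto
  also have "\<dots> \<le> N (\<lambda>F. e \<in> F) * N (\<lambda>F. f \<in> F)" by (rule cross)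
  also have "\<dots> \<le> (T * s ^ de) * (T * s ^ df)" using N_e N_f N_nn by (intro mult_mono) (auto intro: order_trans)
  also have "\<dots> = T\<^sup>2 * s ^ (de + df)" by (simp add: power2_eq_square power_add)
  finally show ?thesis by (simp add: T_def)
qed

lemma power_domination:
  fixes c C :: real and a b :: nat
  assumes c: "c > 0" and le: "\<And>s. 0 < s \<Longrightarrow> s \<le> 1 \<Longrightarrow> c * s ^ a \<le> C * s ^ b"
  shows "b \<le> a"
proof (rule ccontr)
  assume "\<not> b \<le> a"
  then have ab: "Suc a \<le> b" by simp
  have C: "C > 0" using le[of 1] c by simp
  define s where "s = min 1 (c / (2 * C))"
  have s: "0 < s" "s \<le> 1" "s \<le> c / (2 * C)" using c C by (auto simp: s_def)
  have "c * s ^ a \<le> C * s ^ b" by (rule le[OF s(1,2)])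
  also have "\<dots> \<le> C * (s * s ^ a)"
    using power_decreasing[OF ab, of s] s C by (intro mult_left_mono) auto
  finally have "c \<le> C * s" using s by (simp add: mult.assoc)
  also have "\<dots> \<le> C * (c / (2 * C))" using s C by (intro mult_left_mono) auto
  finally show False using c C by simp
qed

lemma rayleigh_support_superadditive:
  fixes de df :: nat
  assumes meas: "is_measure X \<mu>" and ray: "rayleigh X \<mu>"
    and B: "B \<subseteq> X" "\<mu> B > 0"
    and e: "e \<in> X - B" and f: "f \<in> X - B" and ef: "e \<noteq> f"
    and de: "\<And>R. B \<union> {e} \<subseteq> R \<Longrightarrow> R \<subseteq> X \<Longrightarrow> \<mu> R > 0 \<Longrightarrow> de \<le> card (R - B)"
    and df: "\<And>R. B \<union> {f} \<subseteq> R \<Longrightarrow> R \<subseteq> X \<Longrightarrow> \<mu> R > 0 \<Longrightarrow> df \<le> card (R - B)"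
    and R: "B \<union> {e, f} \<subseteq> R" "R \<subseteq> X" "\<mu> R > 0"
  shows "de + df \<le> card (R - B)"
  using B(2) R(3) rayleigh_support_power_bound[OF assms]
  by (intro power_domination[where c = "\<mu> B * \<mu> R"]) auto

text \<open>Otherwise a closest supported superset of B + {g}
  would contain a second new element f, contradicting superadditivity with d_f = 1.\<close>
lemma rayleigh_support_augment:
  assumes meas: "is_measure X \<mu>" and ray: "rayleigh X \<mu>"
    and B: "B \<subseteq> X" "\<mu> B > 0" and S: "B \<subseteq> S" "S \<subseteq> X" "\<mu> S > 0"
    and g: "g \<in> S - B"
  shows "\<mu> (insert g B) > 0"
proof (rule ccontr)
  assume not_pos: "\<not> \<mu> (insert g B) > 0"
  have finX: "finite X" using meas by (simp add: is_measure_def)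
  define P where "P = (\<lambda>R. B \<union> {g} \<subseteq> R \<and> R \<subseteq> X \<and> \<mu> R > 0)"
  define R where "R = arg_min (\<lambda>R. card (R - B)) P"
  have "P S" using S g by (auto simp: P_def)
  then have PR: "P R" and R_min: "\<And>R'. P R' \<Longrightarrow> card (R - B) \<le> card (R' - B)"
    using arg_min_nat_lemma[of P S "\<lambda>R. card (R - B)"] unfolding R_def by auto
  have "R \<noteq> insert g B" using PR not_pos by (auto simp: P_def)
  then obtain f where f: "f \<in> R" "f \<notin> B" "f \<noteq> g" using PR by (auto simp: P_def)
  have "card (R - B) + 1 \<le> card (R - B)"
  proof (rule rayleigh_support_superadditive[OF meas ray B, of g f])
    show "1 \<le> card (R' - B)" if "B \<union> {f} \<subseteq> R'" "R' \<subseteq> X" for R'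
    proof -
      have "f \<in> R' - B" "finite (R' - B)" using that f finX finite_subset by auto
      then show ?thesis by (simp add: Suc_le_eq card_gt_0_iff) blast
    qed
  qed (use PR R_min f g S in \<open>auto simp: P_def\<close>)
  then show False by simp
qed

lemma rayleigh_down_closed_support:
  assumes meas: "is_measure X \<mu>" and ray: "rayleigh X \<mu>" and "\<mu> {} > 0"
  shows "down_closed_support X \<mu>"
  unfolding down_closed_support_def
proof (intro allI impI)
  fix S C assume CS: "C \<subseteq> S" and SX: "S \<subseteq> X" and S: "\<mu> S > 0"
  have "finite C" using CS SX meas by (meson finite_subset is_measure_def subset_trans)
  then show "\<mu> C > 0" using CS
  proof (induction C rule: finite_induct)
    case empty then show ?case using \<open>\<mu> {} > 0\<close> by simp
  next
    case (insert g C)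
    then show ?case using SX S by (intro rayleigh_support_augment[OF meas ray, of C S]) auto
  qed
qed

section \<open>Polynomial partition functions\<close>

definition gibbs_Z :: "'x set \<Rightarrow> ('x \<Rightarrow> real) \<Rightarrow> ('x \<Rightarrow> nat) \<Rightarrow> real \<Rightarrow> real" where
  "gibbs_Z I g c t = (\<Sum>F\<in>I. g F * t ^ c F)"

definition gibbs_mean :: "'x set \<Rightarrow> ('x \<Rightarrow> real) \<Rightarrow> ('x \<Rightarrow> nat) \<Rightarrow> real \<Rightarrow> real" where
  "gibbs_mean I g c t = (\<Sum>F\<in>I. real (c F) * (g F * t ^ c F)) / gibbs_Z I g c t"

lemma gibbs_term_le_Z:
  fixes g :: "'x \<Rightarrow> real" and c :: "'x \<Rightarrow> nat" and t :: real
  assumes "finite I" "\<And>F. F \<in> I \<Longrightarrow> g F \<ge> 0" "t > 0" "x \<in> I"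
  shows "g x * t ^ c x \<le> gibbs_Z I g c t"
  unfolding gibbs_Z_def using assms by (intro member_le_sum) auto

lemma gibbs_Z_pos:
  fixes g :: "'x \<Rightarrow> real" and c :: "'x \<Rightarrow> nat" and t :: real
  assumes "finite I" "\<And>F. F \<in> I \<Longrightarrow> g F \<ge> 0" "t > 0" "x \<in> I" "g x > 0"
  shows "gibbs_Z I g c t > 0"
proof -
  have "0 < g x * t ^ c x" using assms(3,5) by simp
  moreover have "g x * t ^ c x \<le> gibbs_Z I g c t" by (rule gibbs_term_le_Z) (use assms in auto)
  ultimately show ?thesis by linarith
qed

lemma gibbs_mean_as_expectation:
  "gibbs_mean I g c t = (\<Sum>F\<in>I. real (c F) * (g F * t ^ c F / gibbs_Z I g c t))"
  by (simp add: gibbs_mean_def sum_divide_distrib)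

lemma gibbs_mean_nonneg:
  fixes g :: "'x \<Rightarrow> real" and c :: "'x \<Rightarrow> nat" and t :: real
  assumes "\<And>F. F \<in> I \<Longrightarrow> g F \<ge> 0" "t > 0"
  shows "gibbs_mean I g c t \<ge> 0"
  unfolding gibbs_mean_def gibbs_Z_def using assms
  by (intro divide_nonneg_nonneg sum_nonneg) auto

lemma gibbs_mean_le_max:
  fixes g :: "'x \<Rightarrow> real" and c :: "'x \<Rightarrow> nat" and t :: real
  assumes "finite I" "\<And>F. F \<in> I \<Longrightarrow> g F \<ge> 0" "t > 0" "gibbs_Z I g c t > 0"
    and M: "\<And>F. F \<in> I \<Longrightarrow> g F > 0 \<Longrightarrow> c F \<le> M"
  shows "gibbs_mean I g c t \<le> real M"
proof -
  have "(\<Sum>F\<in>I. real (c F) * (g F * t ^ c F)) \<le> (\<Sum>F\<in>I. real M * (g F * t ^ c F))"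
  proof (rule sum_mono)
    fix F assume F: "F \<in> I"
    show "real (c F) * (g F * t ^ c F) \<le> real M * (g F * t ^ c F)"
    proof (cases "g F > 0")
      case True
      then show ?thesis using M[OF F] assms(3) by (intro mult_right_mono) auto
    next
      case False
      then show ?thesis using assms(2)[OF F] by simp
    qed
  qed
  also have "\<dots> = real M * gibbs_Z I g c t" by (simp add: gibbs_Z_def sum_distrib_left)
  finally show ?thesis using assms(4) by (simp add: gibbs_mean_def divide_le_eq)
qed

text \<open>The elementary inequality behind the monotonicity of the mean: for 0 < s <= t the
  pairs (m,n) and (s^m t^n, s^n t^m) are ordered the same way.\<close>
lemma power_cross_sign:
  fixes s t :: real and m n :: nat
  assumes "0 < s" "s \<le> t"
  shows "0 \<le> (real n - real m) * (s ^ m * t ^ n - s ^ n * t ^ m)"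
proof -
  have cross: "s ^ k * t ^ l \<le> s ^ l * t ^ k" if "l \<le> k" for k l :: nat
  proof -
    have "s ^ l * t ^ l * s ^ (k - l) \<le> s ^ l * t ^ l * t ^ (k - l)"
      using assms by (intro mult_left_mono power_mono) auto
    then show ?thesis using that
      by (metis (no_types, lifting) le_add_diff_inverse mult.assoc mult.commute power_add)
  qed
  show ?thesis
  proof (cases "m \<le> n")
    case True
    then show ?thesis using cross[of m n] by (intro mult_nonneg_nonneg) auto
  next
    case False
    then show ?thesis using cross[of n m] by (intro mult_nonpos_nonpos) auto
  qed
qed

text \<open>The mean size is non-decreasing in t.  The difference of cross products is a
  double sum over pairs of configurations which is non-negative after symmetrisation.\<close>
lemma gibbs_mean_mono:
  fixes g :: "'x \<Rightarrow> real" and c :: "'x \<Rightarrow> nat" and s t :: real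
  assumes "\<And>F. F \<in> I \<Longrightarrow> g F \<ge> 0" and st: "0 < s" "s \<le> t"
    and Zs: "gibbs_Z I g c s > 0" and Zt: "gibbs_Z I g c t > 0"
  shows "gibbs_mean I g c s \<le> gibbs_mean I g c t"
proof -
  define h where "h = (\<lambda>F G. g F * g G * (real (c G) - real (c F)) * (s ^ c F * t ^ c G))"
  have cross_diff: "(\<Sum>F\<in>I. real (c F) * (g F * t ^ c F)) * gibbs_Z I g c s
      - (\<Sum>F\<in>I. real (c F) * (g F * s ^ c F)) * gibbs_Z I g c t = (\<Sum>F\<in>I. \<Sum>G\<in>I. h F G)"
    unfolding gibbs_Z_def sum_product h_def
    by (subst sum.swap[where A = I]) (simp add: sum_subtractf[symmetric] algebra_simps)
  have "0 \<le> (\<Sum>F\<in>I. \<Sum>G\<in>I. h F G + h G F)"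
  proof (intro sum_nonneg)
    fix F G assume "F \<in> I" "G \<in> I"
    have "h F G + h G F = (g F * g G) * ((real (c G) - real (c F)) * (s ^ c F * t ^ c G - s ^ c G * t ^ c F))"
      by (simp add: h_def algebra_simps)
    also have "\<dots> \<ge> 0"
    proof (rule mult_nonneg_nonneg)
      show "0 \<le> g F * g G" using assms(1) \<open>F \<in> I\<close> \<open>G \<in> I\<close> by simp
    qed (rule power_cross_sign[OF st])
    finally show "0 \<le> h F G + h G F" .
  qed
  also have "\<dots> = 2 * (\<Sum>F\<in>I. \<Sum>G\<in>I. h F G)"
    using sum.swap[of h I I] by (simp add: sum.distrib)
  finally show ?thesis using cross_diff Zs Zt
    by (simp add: gibbs_mean_def divide_le_eq le_divide_eq mult.commute mult.left_commute)
qed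

text \<open>Convexity of ln Z as a function of ln t, in the form
  ln Z(t) - ln Z(1) <= U(t) ln t; it follows from ln x <= x - 1 applied under the Gibbs law.\<close>
lemma gibbs_log_ratio_bound:
  fixes g :: "'x \<Rightarrow> real" and c :: "'x \<Rightarrow> nat" and t :: real
  assumes g: "\<And>F. F \<in> I \<Longrightarrow> g F \<ge> 0" and t: "t > 0"
    and Zt: "gibbs_Z I g c t > 0" and Z1: "gibbs_Z I g c 1 > 0"
  shows "ln (gibbs_Z I g c t) - ln (gibbs_Z I g c 1) \<le> gibbs_mean I g c t * ln t"
proof -
  define p where "p = (\<lambda>F. g F * t ^ c F / gibbs_Z I g c t)"
  define r where "r = (\<lambda>F. gibbs_Z I g c t / (gibbs_Z I g c 1 * t ^ c F))"
  have p_nn: "F \<in> I \<Longrightarrow> 0 \<le> p F" for F using g Zt t by (simp add: p_def)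
  have p_sum: "(\<Sum>F\<in>I. p F) = 1"
    using Zt by (simp add: p_def gibbs_Z_def sum_divide_distrib[symmetric])
  have r_pos: "r F > 0" for F using Zt Z1 t by (simp add: r_def)
  have "(\<Sum>F\<in>I. p F * ln (r F)) \<le> (\<Sum>F\<in>I. p F * (r F - 1))"
    using p_nn r_pos by (intro sum_mono mult_left_mono ln_le_minus_one) auto
  also have "\<dots> = (\<Sum>F\<in>I. g F / gibbs_Z I g c 1 - p F)"
    using Zt Z1 t by (intro sum.cong) (auto simp: p_def r_def field_simps)
  also have "\<dots> = 0"
    using p_sum Z1 by (simp add: sum_subtractf sum_divide_distrib[symmetric] gibbs_Z_def)
  finally have nonpos: "(\<Sum>F\<in>I. p F * ln (r F)) \<le> 0" .
  have ln_r: "ln (r F) = ln (gibbs_Z I g c t) - ln (gibbs_Z I g c 1) - real (c F) * ln t" for F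
    using Zt Z1 t by (simp add: r_def ln_div ln_mult ln_realpow)
  have "(\<Sum>F\<in>I. p F * ln (r F))
      = (\<Sum>F\<in>I. p F * (ln (gibbs_Z I g c t) - ln (gibbs_Z I g c 1)) - real (c F) * p F * ln t)"
    by (intro sum.cong) (simp_all add: ln_r algebra_simps)
  also have "\<dots> = (ln (gibbs_Z I g c t) - ln (gibbs_Z I g c 1)) * (\<Sum>F\<in>I. p F)
      - (\<Sum>F\<in>I. real (c F) * p F) * ln t"
    by (simp add: sum_subtractf sum_distrib_left sum_distrib_right mult.commute)
  also have "(\<Sum>F\<in>I. real (c F) * p F) = gibbs_mean I g c t"
    by (simp add: gibbs_mean_as_expectation p_def)
  finally show ?thesis using nonpos p_sum by simp
qed

section \<open>Networks\<close>

context
  fixes V :: "'v set" and E :: "'v set set" and \<mu> :: "'v \<Rightarrow> 'v set set \<Rightarrow> real"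
  assumes net: "network V E \<mu>" and empty_pos: "\<forall>i\<in>V. \<mu> i {} > 0"
begin

lemma finite_vertices: "finite V"
  using net by (simp add: network_def simple_graph_def)

lemma edge_subset_vertices: "e \<in> E \<Longrightarrow> e \<subseteq> V"
  using net by (simp add: network_def simple_graph_def)

lemma finite_edges: "finite E"
proof -
  have "E \<subseteq> Pow V" using edge_subset_vertices by auto
  then show ?thesis using finite_vertices by (meson finite_Pow_iff finite_subset)
qed

lemma local_nonneg: "i \<in> V \<Longrightarrow> S \<subseteq> inc_edges E i \<Longrightarrow> \<mu> i S \<ge> 0"
  using net by (simp add: network_def is_measure_def)

lemma local_support_finite: "finite {\<mu> i F |F. F \<subseteq> inc_edges E i \<and> \<mu> i F > 0}"
proof -
  have "{\<mu> i F |F. F \<subseteq> inc_edges E i \<and> \<mu> i F > 0} \<subseteq> \<mu> i ` Pow (inc_edges E i)" by auto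
  moreover have "finite (inc_edges E i)" using finite_edges by (simp add: inc_edges_def)
  ultimately show ?thesis by (meson finite_Pow_iff finite_imageI finite_subset)
qed

lemma local_min_max:
  assumes "i \<in> V" "S \<subseteq> inc_edges E i" "\<mu> i S > 0"
  shows "min_meas (inc_edges E i) (\<mu> i) \<le> \<mu> i S" "\<mu> i S \<le> max_meas (inc_edges E i) (\<mu> i)"
  using assms local_support_finite unfolding min_meas_def max_meas_def
  by (auto intro!: Min_le Max_ge)

lemma local_min_pos: "i \<in> V \<Longrightarrow> min_meas (inc_edges E i) (\<mu> i) > 0"
proof -
  assume i: "i \<in> V"
  have ne: "{\<mu> i F |F. F \<subseteq> inc_edges E i \<and> \<mu> i F > 0} \<noteq> {}" using empty_pos i by blast
  have "min_meas (inc_edges E i) (\<mu> i) \<in> {\<mu> i F |F. F \<subseteq> inc_edges E i \<and> \<mu> i F > 0}"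
    unfolding min_meas_def by (rule Min_in[OF local_support_finite ne])
  then show ?thesis by auto
qed

lemma local_max_pos: "i \<in> V \<Longrightarrow> max_meas (inc_edges E i) (\<mu> i) > 0"
  using local_min_max(2)[of i "{}"] empty_pos by fastforce

lemma local_A_pos: "i \<in> V \<Longrightarrow> Ameas (inc_edges E i) (\<mu> i) > 0"
  using local_min_pos local_max_pos by (simp add: Ameas_def)

lemma global_nonneg: "global_meas V E \<mu> F \<ge> 0"
  unfolding global_meas_def by (rule prod_nonneg) (auto intro: local_nonneg)

lemma global_empty_pos: "global_meas V E \<mu> {} > 0"
  unfolding global_meas_def using empty_pos by (intro prod_pos) auto

lemma partition_fn_gibbs: "partition_fn V E \<mu> t = gibbs_Z (Pow E) (global_meas V E \<mu>) card t"
  by (simp add: partition_fn_def gibbs_Z_def)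

lemma energy_gibbs: "energy V E \<mu> t = gibbs_mean (Pow E) (global_meas V E \<mu>) card t"
  by (simp add: energy_def gibbs_mean_as_expectation partition_fn_gibbs)

lemma partition_fn_pos: "t > 0 \<Longrightarrow> partition_fn V E \<mu> t > 0"
  unfolding partition_fn_gibbs using finite_edges global_nonneg global_empty_pos
  by (intro gibbs_Z_pos[where x = "{}"]) auto

lemma energy_mono: "0 < s \<Longrightarrow> s \<le> t \<Longrightarrow> energy V E \<mu> s \<le> energy V E \<mu> t"
  unfolding energy_gibbs using global_nonneg partition_fn_pos[of s] partition_fn_pos[of t]
  by (intro gibbs_mean_mono) (auto simp: partition_fn_gibbs)

lemma energy_nonneg: "t > 0 \<Longrightarrow> energy V E \<mu> t \<ge> 0"
  unfolding energy_gibbs using global_nonneg by (intro gibbs_mean_nonneg) auto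

lemma max_size_attained: "\<exists>F. F \<subseteq> E \<and> global_meas V E \<mu> F > 0 \<and> card F = max_size V E \<mu>"
  and max_size_ge: "F \<subseteq> E \<Longrightarrow> global_meas V E \<mu> F > 0 \<Longrightarrow> card F \<le> max_size V E \<mu>"
proof -
  have fin: "finite {card F |F. F \<subseteq> E \<and> global_meas V E \<mu> F > 0}"
    using finite_edges by (simp add: finite_image_set)
  have "{card F |F. F \<subseteq> E \<and> global_meas V E \<mu> F > 0} \<noteq> {}" using global_empty_pos by blast
  from Max_in[OF fin this] show "\<exists>F. F \<subseteq> E \<and> global_meas V E \<mu> F > 0 \<and> card F = max_size V E \<mu>"
    unfolding max_size_def by auto
  show "F \<subseteq> E \<Longrightarrow> global_meas V E \<mu> F > 0 \<Longrightarrow> card F \<le> max_size V E \<mu>"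
    unfolding max_size_def by (rule Max_ge[OF fin]) auto
qed

lemma energy_le_max_size: "t > 0 \<Longrightarrow> energy V E \<mu> t \<le> real (max_size V E \<mu>)"
  unfolding energy_gibbs using finite_edges global_nonneg partition_fn_pos[of t] max_size_ge
  by (intro gibbs_mean_le_max) (auto simp: partition_fn_gibbs)

lemma global_min_bound:
  assumes F: "F \<subseteq> E" and pos: "global_meas V E \<mu> F > 0"
  shows "(\<Prod>i\<in>V. min_meas (inc_edges E i) (\<mu> i)) \<le> global_meas V E \<mu> F"
  unfolding global_meas_def
proof (rule prod_mono)
  fix i assume i: "i \<in> V"
  have "\<mu> i (F \<inter> inc_edges E i) \<noteq> 0"
    using pos i finite_vertices unfolding global_meas_def by (metis prod_zero_iff less_irrefl)
  then have "\<mu> i (F \<inter> inc_edges E i) > 0" using local_nonneg[OF i, of "F \<inter> inc_edges E i"] by auto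
  then show "0 \<le> min_meas (inc_edges E i) (\<mu> i) \<and> min_meas (inc_edges E i) (\<mu> i) \<le> \<mu> i (F \<inter> inc_edges E i)"
    using local_min_pos[OF i] local_min_max(1)[OF i] by auto
qed

lemma global_max_bound: "global_meas V E \<mu> F \<le> (\<Prod>i\<in>V. max_meas (inc_edges E i) (\<mu> i))"
  unfolding global_meas_def
proof (rule prod_mono)
  fix i assume i: "i \<in> V"
  have "\<mu> i (F \<inter> inc_edges E i) \<le> max_meas (inc_edges E i) (\<mu> i)"
    using local_min_max(2)[OF i, of "F \<inter> inc_edges E i"] local_max_pos[OF i] by force
  then show "0 \<le> \<mu> i (F \<inter> inc_edges E i) \<and> \<mu> i (F \<inter> inc_edges E i) \<le> max_meas (inc_edges E i) (\<mu> i)"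
    using local_nonneg[OF i] by auto
qed

text \<open>A largest supported configuration alone gives ln Z(t) >= M ln t + sum_i ln (min mu_i).\<close>
lemma log_partition_fn_lower:
  assumes t: "t > 0"
  shows "(\<Sum>i\<in>V. ln (min_meas (inc_edges E i) (\<mu> i))) + real (max_size V E \<mu>) * ln t
       \<le> ln (partition_fn V E \<mu> t)"
proof -
  obtain F where F: "F \<subseteq> E" "global_meas V E \<mu> F > 0" "card F = max_size V E \<mu>"
    using max_size_attained by blast
  have prod_pos: "(\<Prod>i\<in>V. min_meas (inc_edges E i) (\<mu> i)) > 0"
    using local_min_pos by (intro prod_pos) auto
  have "(\<Prod>i\<in>V. min_meas (inc_edges E i) (\<mu> i)) * t ^ max_size V E \<mu> \<le> global_meas V E \<mu> F * t ^ card F"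
    using global_min_bound[OF F(1,2)] t by (simp add: F(3) mult_right_mono)
  also have "\<dots> \<le> partition_fn V E \<mu> t"
    unfolding partition_fn_gibbs using finite_edges global_nonneg t F(1) by (intro gibbs_term_le_Z) auto
  finally have "ln ((\<Prod>i\<in>V. min_meas (inc_edges E i) (\<mu> i)) * t ^ max_size V E \<mu>) \<le> ln (partition_fn V E \<mu> t)"
    using prod_pos t partition_fn_pos[OF t] by (subst ln_le_cancel_iff) auto
  moreover have "ln (\<Prod>i\<in>V. min_meas (inc_edges E i) (\<mu> i)) = (\<Sum>i\<in>V. ln (min_meas (inc_edges E i) (\<mu> i)))"
    using local_min_pos by (intro ln_prod[OF finite_vertices]) force
  ultimately show ?thesis using prod_pos t by (simp add: ln_mult ln_realpow)
qed

text \<open>Counting the 2^|E| configurations: ln Z(1) <= |E| ln 2 + sum_i ln (max mu_i).\<close>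
lemma log_partition_fn_one_upper:
  "ln (partition_fn V E \<mu> 1) \<le> real (card E) * ln 2 + (\<Sum>i\<in>V. ln (max_meas (inc_edges E i) (\<mu> i)))"
proof -
  have prod_pos: "(\<Prod>i\<in>V. max_meas (inc_edges E i) (\<mu> i)) > 0"
    using local_max_pos by (intro prod_pos) auto
  have "partition_fn V E \<mu> 1 \<le> (\<Sum>F\<in>Pow E. \<Prod>i\<in>V. max_meas (inc_edges E i) (\<mu> i))"
    unfolding partition_fn_def by (intro sum_mono) (simp add: global_max_bound)
  also have "\<dots> = 2 ^ card E * (\<Prod>i\<in>V. max_meas (inc_edges E i) (\<mu> i))"
    using finite_edges by (simp add: card_Pow)
  finally have "ln (partition_fn V E \<mu> 1) \<le> ln (2 ^ card E * (\<Prod>i\<in>V. max_meas (inc_edges E i) (\<mu> i)))"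
    using partition_fn_pos[of 1] by (subst ln_le_cancel_iff) auto
  moreover have "ln (\<Prod>i\<in>V. max_meas (inc_edges E i) (\<mu> i)) = (\<Sum>i\<in>V. ln (max_meas (inc_edges E i) (\<mu> i)))"
    using local_max_pos by (intro ln_prod[OF finite_vertices]) force
  ultimately show ?thesis using prod_pos by (simp add: ln_mult ln_realpow)
qed

lemma sum_ln_A:
  "(\<Sum>i\<in>V. ln (Ameas (inc_edges E i) (\<mu> i)))
   = (\<Sum>i\<in>V. ln (max_meas (inc_edges E i) (\<mu> i))) - (\<Sum>i\<in>V. ln (min_meas (inc_edges E i) (\<mu> i)))"
  unfolding sum_subtractf[symmetric]
proof (rule sum.cong[OF refl])
  fix i assume i: "i \<in> V"
  show "ln (Ameas (inc_edges E i) (\<mu> i))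
      = ln (max_meas (inc_edges E i) (\<mu> i)) - ln (min_meas (inc_edges E i) (\<mu> i))"
    unfolding Ameas_def by (rule ln_divide_pos[OF local_max_pos[OF i] local_min_pos[OF i]])
qed

text \<open>The lower bound on the energy: combine the two estimates with convexity of ln Z.\<close>
lemma energy_lower:
  assumes t: "t > 1"
  shows "real (max_size V E \<mu>) - (real (card E) * ln 2 + (\<Sum>i\<in>V. ln (Ameas (inc_edges E i) (\<mu> i)))) / ln t
    \<le> energy V E \<mu> t"
proof -
  have "ln (partition_fn V E \<mu> t) - ln (partition_fn V E \<mu> 1) \<le> energy V E \<mu> t * ln t"
    unfolding energy_gibbs partition_fn_gibbs using t global_nonneg partition_fn_pos[of t] partition_fn_pos[of 1]
    by (intro gibbs_log_ratio_bound) (auto simp: partition_fn_gibbs)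
  then have "real (max_size V E \<mu>) * ln t - (real (card E) * ln 2 + (\<Sum>i\<in>V. ln (Ameas (inc_edges E i) (\<mu> i))))
      \<le> energy V E \<mu> t * ln t"
    using log_partition_fn_lower[of t] log_partition_fn_one_upper t by (simp add: sum_ln_A)
  then show ?thesis using t by (simp add: field_simps)
qed

text \<open>With down-closed support, adding an edge multiplies a local weight by at most A(mu_i):
  mu_i(S + e) <= max mu_i = A(mu_i) min mu_i <= A(mu_i) mu_i(S).\<close>
lemma local_ratio:
  assumes dc: "down_closed_support (inc_edges E i) (\<mu> i)"
    and i: "i \<in> V" and S: "S \<subseteq> inc_edges E i" and e: "e \<in> inc_edges E i"
  shows "\<mu> i (insert e S) \<le> Ameas (inc_edges E i) (\<mu> i) * \<mu> i S"
proof (cases "\<mu> i (insert e S) > 0")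
  case True
  have "\<mu> i S > 0" using dc True S e unfolding down_closed_support_def by blast
  have "\<mu> i (insert e S) \<le> max_meas (inc_edges E i) (\<mu> i)"
    using local_min_max(2)[OF i _ True] S e by simp
  also have "\<dots> = Ameas (inc_edges E i) (\<mu> i) * min_meas (inc_edges E i) (\<mu> i)"
    using local_min_pos[OF i] by (simp add: Ameas_def)
  also have "\<dots> \<le> Ameas (inc_edges E i) (\<mu> i) * \<mu> i S"
    using local_min_max(1)[OF i S \<open>\<mu> i S > 0\<close>] local_A_pos[OF i] by (intro mult_left_mono) auto
  finally show ?thesis .
next
  case False
  then show ?thesis using local_A_pos[OF i] local_nonneg[OF i S] by (smt (verit) mult_nonneg_nonneg)
qed

text \<open>Adding the edge e = ij changes only the two local factors at i and j.\<close>
lemma global_ratio: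
  assumes dc: "\<forall>i\<in>V. down_closed_support (inc_edges E i) (\<mu> i)"
    and e: "e \<in> E" and F: "F \<subseteq> E" "e \<in> F"
  shows "global_meas V E \<mu> F \<le> (\<Prod>i\<in>e. Ameas (inc_edges E i) (\<mu> i)) * global_meas V E \<mu> (F - {e})"
proof -
  define a where "a = (\<lambda>k. if k \<in> e then Ameas (inc_edges E k) (\<mu> k) else 1)"
  have factor: "\<mu> k (F \<inter> inc_edges E k) \<le> a k * \<mu> k ((F - {e}) \<inter> inc_edges E k)" if k: "k \<in> V" for k
  proof (cases "k \<in> e")
    case True
    then have "F \<inter> inc_edges E k = insert e ((F - {e}) \<inter> inc_edges E k)" "e \<in> inc_edges E k"
      using e F by (auto simp: inc_edges_def)
    then show ?thesis using local_ratio[OF bspec[OF dc k] k, of "(F - {e}) \<inter> inc_edges E k" e] True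
      by (simp add: a_def)
  next
    case False
    then have "F \<inter> inc_edges E k = (F - {e}) \<inter> inc_edges E k" by (auto simp: inc_edges_def)
    then show ?thesis using False by (simp add: a_def)
  qed
  have "global_meas V E \<mu> F \<le> (\<Prod>k\<in>V. a k * \<mu> k ((F - {e}) \<inter> inc_edges E k))"
    unfolding global_meas_def by (rule prod_mono) (auto intro: local_nonneg factor)
  also have "\<dots> = (\<Prod>k\<in>V. a k) * global_meas V E \<mu> (F - {e})"
    by (simp add: global_meas_def prod.distrib)
  also have "(\<Prod>k\<in>V. a k) = (\<Prod>i\<in>e. Ameas (inc_edges E i) (\<mu> i))"
    unfolding a_def prod.inter_restrict[OF finite_vertices, symmetric]
    using edge_subset_vertices[OF e] by (simp add: Int_absorb1)
  finally show ?thesis .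
qed

text \<open>Deleting e maps the configurations containing e injectively to those avoiding it and
  loses at most the factor t A_i A_j of weight; hence P^t(e in F) <= t A_i A_j.\<close>
lemma edge_occupation_bound:
  assumes dc: "\<forall>i\<in>V. down_closed_support (inc_edges E i) (\<mu> i)"
    and e: "e \<in> E" and t: "t > 0"
  shows "(\<Sum>F\<in>{F\<in>Pow E. e \<in> F}. global_meas V E \<mu> F * t ^ card F)
     \<le> t * (\<Prod>i\<in>e. Ameas (inc_edges E i) (\<mu> i)) * partition_fn V E \<mu> t"
proof -
  define A where "A = (\<Prod>i\<in>e. Ameas (inc_edges E i) (\<mu> i))"
  define g where "g = (\<lambda>G. global_meas V E \<mu> G * t ^ card G)"
  have A: "A \<ge> 0" unfolding A_def using edge_subset_vertices[OF e] local_A_pos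
    by (intro prod_nonneg) (auto intro: less_imp_le)
  have g: "g G \<ge> 0" for G using global_nonneg t by (simp add: g_def)
  have "(\<Sum>F\<in>{F\<in>Pow E. e \<in> F}. g F) \<le> (\<Sum>F\<in>{F\<in>Pow E. e \<in> F}. t * A * g (F - {e}))"
  proof (rule sum_mono)
    fix F assume F: "F \<in> {F\<in>Pow E. e \<in> F}"
    then have "finite F" "e \<in> F" using finite_edges finite_subset by auto
    then have card: "card F = Suc (card (F - {e}))" by (rule card_Suc_Diff1[symmetric])
    have "global_meas V E \<mu> F * t ^ card F \<le> A * global_meas V E \<mu> (F - {e}) * t ^ card F"
      unfolding A_def using global_ratio[OF dc e] F t by (intro mult_right_mono) auto
    then show "g F \<le> t * A * g (F - {e})" by (simp add: g_def card algebra_simps)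
  qed
  also have "\<dots> = t * A * (\<Sum>G\<in>(\<lambda>F. F - {e}) ` {F\<in>Pow E. e \<in> F}. g G)"
    by (subst sum.reindex) (auto simp: inj_on_def sum_distrib_left)
  also have "\<dots> \<le> t * A * (\<Sum>G\<in>Pow E. g G)"
    using finite_edges g t A by (intro mult_left_mono sum_mono2) auto
  finally show ?thesis by (simp add: A_def g_def partition_fn_def)
qed

lemma energy_edge_sum:
  "energy V E \<mu> t = (\<Sum>e\<in>E. \<Sum>F\<in>{F\<in>Pow E. e \<in> F}. global_meas V E \<mu> F * t ^ card F) / partition_fn V E \<mu> t"
proof -
  define g where "g = (\<lambda>F. global_meas V E \<mu> F * t ^ card F)"
  have "(\<Sum>F\<in>Pow E. real (card F) * g F) = (\<Sum>F\<in>Pow E. \<Sum>e\<in>E. if e \<in> F then g F else 0)"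
  proof (rule sum.cong[OF refl])
    fix F assume "F \<in> Pow E"
    then have "{e\<in>E. e \<in> F} = F" by auto
    then show "real (card F) * g F = (\<Sum>e\<in>E. if e \<in> F then g F else 0)"
      using sum.inter_filter[OF finite_edges, of "\<lambda>_. g F" "\<lambda>e. e \<in> F"] by simp
  qed
  also have "\<dots> = (\<Sum>e\<in>E. \<Sum>F\<in>Pow E. if e \<in> F then g F else 0)"
    by (rule sum.swap)
  also have "\<dots> = (\<Sum>e\<in>E. \<Sum>F\<in>{F\<in>Pow E. e \<in> F}. g F)"
    using finite_edges by (intro sum.cong refl sum.inter_filter[symmetric]) simp
  finally show ?thesis
    by (simp add: energy_gibbs gibbs_mean_def partition_fn_gibbs[symmetric] partition_fn_def g_def)
qed

lemma energy_upper:
  assumes dc: "\<forall>i\<in>V. down_closed_support (inc_edges E i) (\<mu> i)" and t: "t > 0"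
  shows "energy V E \<mu> t \<le> t * (\<Sum>e\<in>E. \<Prod>i\<in>e. Ameas (inc_edges E i) (\<mu> i))"
proof -
  have "(\<Sum>e\<in>E. \<Sum>F\<in>{F\<in>Pow E. e \<in> F}. global_meas V E \<mu> F * t ^ card F)
      \<le> (\<Sum>e\<in>E. t * (\<Prod>i\<in>e. Ameas (inc_edges E i) (\<mu> i)) * partition_fn V E \<mu> t)"
    using edge_occupation_bound[OF dc _ t] by (rule sum_mono)
  also have "\<dots> = t * (\<Sum>e\<in>E. \<Prod>i\<in>e. Ameas (inc_edges E i) (\<mu> i)) * partition_fn V E \<mu> t"
    by (simp add: sum_distrib_left sum_distrib_right)
  finally show ?thesis
    using partition_fn_pos[OF t] by (simp add: energy_edge_sum divide_le_eq)
qed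

end

lemma tendsto_0_by_linear_bound:
  fixes f :: "real \<Rightarrow> real"
  assumes "\<And>t. t > 0 \<Longrightarrow> 0 \<le> f t" and "\<And>t. t > 0 \<Longrightarrow> f t \<le> t * C"
  shows "(f \<longlongrightarrow> 0) (at_right 0)"
proof (rule tendsto_sandwich[where f = "\<lambda>_. 0" and h = "\<lambda>t. t * C"])
  show "\<forall>\<^sub>F t in at_right 0. 0 \<le> f t" "\<forall>\<^sub>F t in at_right 0. f t \<le> t * C"
    using assms eventually_at_right_less[of "0::real"] by (auto elim: eventually_mono)
  have "((\<lambda>t::real. t * C) \<longlongrightarrow> 0 * C) (at_right 0)" by (intro tendsto_intros)
  then show "((\<lambda>t::real. t * C) \<longlongrightarrow> 0) (at_right 0)" by simp
qed simp

lemma tendsto_at_top_by_log_bound: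
  fixes f :: "real \<Rightarrow> real"
  assumes "\<And>t. t > 1 \<Longrightarrow> M - C / ln t \<le> f t" and "\<And>t. t > 1 \<Longrightarrow> f t \<le> M"
  shows "(f \<longlongrightarrow> M) at_top"
proof (rule tendsto_sandwich[where f = "\<lambda>t. M - C / ln t" and h = "\<lambda>_. M"])
  show "\<forall>\<^sub>F t in at_top. M - C / ln t \<le> f t"
    using eventually_gt_at_top[of "1::real"] by (rule eventually_mono) (rule assms(1))
  show "\<forall>\<^sub>F t in at_top. f t \<le> M"
    using eventually_gt_at_top[of "1::real"] by (rule eventually_mono) (rule assms(2))
  have "((\<lambda>t. C / ln t) \<longlongrightarrow> 0) at_top"
    by (rule tendsto_divide_0[OF tendsto_const filterlim_at_top_imp_at_infinity[OF ln_at_top]])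
  then have "((\<lambda>t. M - C / ln t) \<longlongrightarrow> M - 0) at_top" by (intro tendsto_intros)
  then show "((\<lambda>t. M - C / ln t) \<longlongrightarrow> M) at_top" by simp
qed simp

theorem mainTheorem8:
  fixes V :: "'v set" and E :: "'v set set" and \<mu> :: "'v \<Rightarrow> 'v set set \<Rightarrow> real"
  assumes "cavity_monotone_network V E \<mu>"
  shows "mono_on {0<..} (energy V E \<mu>) \<and>
         (energy V E \<mu> \<longlongrightarrow> 0) (at_right 0) \<and>
         (energy V E \<mu> \<longlongrightarrow> real (max_size V E \<mu>)) at_top \<and>
         (\<forall>t>0. energy V E \<mu> t \<le>
           t * (\<Sum>e\<in>E. \<Prod>i\<in>e. Ameas (inc_edges E i) (\<mu> i))) \<and>
         (\<forall>t>1. energy V E \<mu> t \<ge> real (max_size V E \<mu>) -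
           (real (card E) * ln 2 + (\<Sum>i\<in>V. ln (Ameas (inc_edges E i) (\<mu> i)))) / ln t)"
proof -
  have net: "network V E \<mu>" and empty: "\<forall>i\<in>V. \<mu> i {} > 0"
    using assms by (auto simp: cavity_monotone_network_def cavity_monotone_def)
  have "\<forall>i\<in>V. down_closed_support (inc_edges E i) (\<mu> i)"
    using assms rayleigh_down_closed_support
    by (auto simp: cavity_monotone_network_def network_def cavity_monotone_def)
  then have upper: "\<forall>t>0. energy V E \<mu> t \<le> t * (\<Sum>e\<in>E. \<Prod>i\<in>e. Ameas (inc_edges E i) (\<mu> i))"
    using energy_upper[OF net empty] by blast
  have lower: "\<forall>t>1. real (max_size V E \<mu>) -
      (real (card E) * ln 2 + (\<Sum>i\<in>V. ln (Ameas (inc_edges E i) (\<mu> i)))) / ln t \<le> energy V E \<mu> t"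
    using energy_lower[OF net empty] by blast
  have "mono_on {0<..} (energy V E \<mu>)"
    by (rule mono_onI) (auto intro: energy_mono[OF net empty])
  moreover have "(energy V E \<mu> \<longlongrightarrow> 0) (at_right 0)"
    using energy_nonneg[OF net empty] upper by (intro tendsto_0_by_linear_bound) auto
  moreover have "(energy V E \<mu> \<longlongrightarrow> real (max_size V E \<mu>)) at_top"
    using lower energy_le_max_size[OF net empty] by (intro tendsto_at_top_by_log_bound) auto
  ultimately show ?thesis using upper lower by blast
qed

end
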